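(* Let $\Sigma$ be a finite non-empty alphabet, $\Sigma^*$ the set of finite strings over $\Sigma$, $V=\mathbb{R}^d$ with a fixed norm $|\cdot|_V$, $W=\mathbb{R}^N$ with a fixed norm $|\cdot|_W$, and $\lambda>0$. There is a constant $c(\lambda)>0$ depending only on $\lambda$ such that for all maps $\mathbf{h},\mathbf{g}\colon\Sigma^*\to V$, $$d_{\mathcal{V}(V,\Delta)}(\mathbf{h},\mathbf{g})\le c(\lambda)\, d^{\mathcal{H}}_{\mathrm{Aff}(V)}(\mathbf{h},\mathbf{g}).$$
   Context: $\mathrm{Aff}(V)$ is the group of invertible affine maps of $V$; $\mathrm{Aff}(V,W)$ is the set of affine maps $V\to W$, i.e. $\mathbf{v}\mapsto\mathbf{A}\mathbf{v}+\mathbf{b}$ with $\mathbf{A}$ linear $V\to W$, $\mathbf{b}\in W$. For $\mathbf{f}\colon\Sigma^*\to V$, $\|\mathbf{f}\|_\infty=\sup_{\mathbf{y}}|\mathbf{f}(\mathbf{y})|_V$, and $d_\infty(\mathbf{f},\mathbf{f}')=\|\mathbf{f}-\mathbf{f}'\|_\infty$ (values in $[0,\infty]$); analogously $d_{\infty,W}$ for maps into $W$ and $d_{\infty,\Delta}(p,q)=\sup_{\mathbf{y}}|p(\mathbf{y})-q(\mathbf{y})|_W$ for maps $p,q\colon\Sigma^*\to\Delta^{N-1}$, the probability simplex in $\mathbb{R}^N$. For a (hemi-)metric $d$ and non-empty sets $E,E'$, $d(x,E)=\inf_{y\in E}d(x,y)$ and the Hausdorff–Hoare map is $d^{\mathcal{H}}(E,E')=\sup_{x\in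 E}d(x,E')$. Define $d^{\mathcal{H}}_{\mathrm{Aff}(V)}(\mathbf{h},\mathbf{g})=d_\infty^{\mathcal{H}}(\{\psi\circ\mathbf{h}:\psi\in\mathrm{Aff}(V)\},\{\psi\circ\mathbf{g}:\psi\in\mathrm{Aff}(V)\})$. $\mathrm{softmax}_\lambda\colon\mathbb{R}^N\to\Delta^{N-1}$ is the softmax with inverse temperature $\lambda$, $\mathrm{softmax}_\lambda(\mathbf{x})_i=e^{\lambda x_i}/\sum_j e^{\lambda x_j}$. Let $\mathcal{V}_N(\mathbf{h})=\{\mathrm{softmax}_\lambda\circ\psi\circ\mathbf{h}:\psi\in\mathrm{Aff}(V,W)\}$ and $d_{\mathcal{V}(V,\Delta)}(\mathbf{h},\mathbf{g})=d^{\mathcal{H}}_{\infty,\Delta}(\mathcal{V}_N(\mathbf{h}),\mathcal{V}_N(\mathbf{g}))$. *)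

theory Defs
  imports "HOL-Analysis.Analysis" "HOL-Library.FuncSet"
begin

text \<open>Explicit carriers, so that the constant c may be chosen before the
  alphabet, the dimensions d, N and the norms.
  R^n is represented by functions nat => real vanishing outside {..<n}.\<close>

definition vecs :: "nat \<Rightarrow> (nat \<Rightarrow> real) set" where
  "vecs n = {v. \<forall>i\<ge>n. v i = 0}"

definition is_norm_on :: "nat \<Rightarrow> ((nat \<Rightarrow> real) \<Rightarrow> real) \<Rightarrow> bool" where
  "is_norm_on n nrm \<longleftrightarrow>
     (\<forall>v\<in>vecs n. 0 \<le> nrm v \<and> (nrm v = 0 \<longleftrightarrow> v = (\<lambda>i. 0))) \<and>
     (\<forall>v\<in>vecs n. \<forall>a::real. nrm (\<lambda>i. a * v i) = \<bar>a\<bar> * nrm v) \<and>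
     (\<forall>v\<in>vecs n. \<forall>w\<in>vecs n. nrm (\<lambda>i. v i + w i) \<le> nrm v + nrm w)"

definition aff_maps :: "nat \<Rightarrow> nat \<Rightarrow> ((nat \<Rightarrow> real) \<Rightarrow> (nat \<Rightarrow> real)) set" where
  "aff_maps d N = {\<psi>. \<exists>(A :: nat \<Rightarrow> nat \<Rightarrow> real) b. b \<in> vecs N \<and>
      \<psi> = (\<lambda>v i. if i < N then (\<Sum>j<d. A i j * v j) + b i else 0)}"

definition inv_aff_maps :: "nat \<Rightarrow> ((nat \<Rightarrow> real) \<Rightarrow> (nat \<Rightarrow> real)) set" where
  "inv_aff_maps d = {\<psi> \<in> aff_maps d d. bij_betw \<psi> (vecs d) (vecs d)}"

definition sup_dist :: "((nat \<Rightarrow> real) \<Rightarrow> real) \<Rightarrow> 'a set \<Rightarrow>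
    ('a list \<Rightarrow> nat \<Rightarrow> real) \<Rightarrow> ('a list \<Rightarrow> nat \<Rightarrow> real) \<Rightarrow> ereal" where
  "sup_dist nrm S f f' = (SUP y\<in>lists S. ereal (nrm (\<lambda>i. f y i - f' y i)))"

definition hausdorff_hoare :: "('b \<Rightarrow> 'b \<Rightarrow> ereal) \<Rightarrow> 'b set \<Rightarrow> 'b set \<Rightarrow> ereal" where
  "hausdorff_hoare dst E E' = (SUP x\<in>E. INF y\<in>E'. dst x y)"

definition d_Aff :: "((nat \<Rightarrow> real) \<Rightarrow> real) \<Rightarrow> nat set \<Rightarrow> nat \<Rightarrow>
    (nat list \<Rightarrow> nat \<Rightarrow> real) \<Rightarrow> (nat list \<Rightarrow> nat \<Rightarrow> real) \<Rightarrow> ereal" where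
  "d_Aff nV S d h g = hausdorff_hoare (sup_dist nV S)
      ((\<lambda>\<psi>. \<psi> \<circ> h) ` inv_aff_maps d) ((\<lambda>\<psi>. \<psi> \<circ> g) ` inv_aff_maps d)"

definition softmax :: "real \<Rightarrow> nat \<Rightarrow> (nat \<Rightarrow> real) \<Rightarrow> (nat \<Rightarrow> real)" where
  "softmax lam N x = (\<lambda>i. if i < N then exp (lam * x i) / (\<Sum>j<N. exp (lam * x j)) else 0)"

definition V_N :: "real \<Rightarrow> nat \<Rightarrow> nat \<Rightarrow> (nat list \<Rightarrow> nat \<Rightarrow> real) \<Rightarrow> (nat list \<Rightarrow> nat \<Rightarrow> real) set" where
  "V_N lam d N h = {softmax lam N \<circ> \<psi> \<circ> h | \<psi>. \<psi> \<in> aff_maps d N}"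

definition d_VDelta :: "real \<Rightarrow> ((nat \<Rightarrow> real) \<Rightarrow> real) \<Rightarrow> nat set \<Rightarrow> nat \<Rightarrow> nat \<Rightarrow>
    (nat list \<Rightarrow> nat \<Rightarrow> real) \<Rightarrow> (nat list \<Rightarrow> nat \<Rightarrow> real) \<Rightarrow> ereal" where
  "d_VDelta lam nW S d N h g = hausdorff_hoare (sup_dist nW S) (V_N lam d N h) (V_N lam d N g)"

end

theory Submission
  imports Defs
begin

(* Aff(V) contains the homotheties v |-> t v, and composing both sides with a homothety
   multiplies sup distances by |t|; hence d^H_Aff(h, g) is either 0 or infinite, and c = 1 works.
   If it is finite, h is a uniform limit of affine images phi o g.  An affine map into W is
   Lipschitz from the norm of V to the maximum norm on W (all norms on R^d are equivalent), and
   softmax is uniformly continuous, so every softmax o psi o h is a uniform limit of the maps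
   softmax o (psi o phi) o g in V_N(g), and the left-hand side vanishes. *)

definition unit_vec :: "nat \<Rightarrow> nat \<Rightarrow> real" where
  "unit_vec k = (\<lambda>i. if i = k then 1 else 0)"

lemma unit_vec_in_vecs: "k < n \<Longrightarrow> unit_vec k \<in> vecs n"
  unfolding unit_vec_def vecs_def by auto

lemma vecs_mono: "m \<le> n \<Longrightarrow> v \<in> vecs m \<Longrightarrow> v \<in> vecs n"
  unfolding vecs_def by auto

lemma zero_in_vecs: "(\<lambda>i. 0) \<in> vecs n"
  unfolding vecs_def by simp

lemma vecs_diff: "v \<in> vecs n \<Longrightarrow> w \<in> vecs n \<Longrightarrow> (\<lambda>i. v i - w i) \<in> vecs n"
  unfolding vecs_def by simp

lemma vecs_scale: "v \<in> vecs n \<Longrightarrow> (\<lambda>i. a * v i) \<in> vecs n"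
  unfolding vecs_def by simp

lemma compact_vecs_l1_sphere: "compact {v \<in> vecs n. (\<Sum>i<n. \<bar>v i\<bar>) = 1}" (is "compact ?K")
proof -
  define B where "B = (\<lambda>i::nat. if i < n then {-1..1::real} else {0})"
  have "compactin (product_topology (\<lambda>i. euclidean) UNIV) (Pi\<^sub>E UNIV B)"
    by (subst compactin_PiE) (auto simp: B_def)
  then have "compact (Pi\<^sub>E UNIV B)" by (simp add: euclidean_product_topology)
  moreover have "closed ?K"
  proof -
    have "closed {v::nat\<Rightarrow>real. \<forall>i. n \<le> i \<longrightarrow> v i = 0}"
    proof (intro closed_Collect_all closed_Collect_imp)
      show "open {v::nat\<Rightarrow>real. n \<le> i}" for i by (cases "n \<le> i") simp_all
    qed (intro closed_Collect_eq continuous_on_product_coordinates continuous_on_const)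
    moreover have "closed {v::nat\<Rightarrow>real. (\<Sum>i<n. \<bar>v i\<bar>) = 1}"
      by (intro closed_Collect_eq continuous_on_sum continuous_on_rabs
          continuous_on_product_coordinates continuous_on_const)
    ultimately show ?thesis by (simp add: vecs_def Collect_conj_eq closed_Int)
  qed
  moreover have "?K \<subseteq> Pi\<^sub>E UNIV B"
  proof
    fix v assume v: "v \<in> ?K"
    have "\<bar>v i\<bar> \<le> 1" if "i < n" for i
      using v member_le_sum[of i "{..<n}" "\<lambda>i. \<bar>v i\<bar>"] that by simp
    then show "v \<in> Pi\<^sub>E UNIV B"
      using v by (simp add: B_def PiE_UNIV_domain Pi_iff vecs_def abs_le_iff)
  qed
  ultimately have "compact (Pi\<^sub>E UNIV B \<inter> ?K)" by (intro compact_Int_closed)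
  then show ?thesis using \<open>?K \<subseteq> Pi\<^sub>E UNIV B\<close> by (simp add: Int_absorb1)
qed

context
  fixes n :: nat and nrm :: "(nat \<Rightarrow> real) \<Rightarrow> real"
  assumes nrm: "is_norm_on n nrm"
begin

lemma is_norm_on_nonneg: "v \<in> vecs n \<Longrightarrow> 0 \<le> nrm v"
  using nrm unfolding is_norm_on_def by blast

lemma is_norm_on_eq_0_iff: "v \<in> vecs n \<Longrightarrow> nrm v = 0 \<longleftrightarrow> v = (\<lambda>i. 0)"
  using nrm unfolding is_norm_on_def by blast

lemma is_norm_on_zero: "nrm (\<lambda>i. 0) = 0"
  using is_norm_on_eq_0_iff zero_in_vecs by blast

lemma is_norm_on_scale: "v \<in> vecs n \<Longrightarrow> nrm (\<lambda>i. a * v i) = \<bar>a\<bar> * nrm v"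
  using nrm unfolding is_norm_on_def by blast

lemma is_norm_on_triangle:
  "v \<in> vecs n \<Longrightarrow> w \<in> vecs n \<Longrightarrow> nrm (\<lambda>i. v i + w i) \<le> nrm v + nrm w"
  using nrm unfolding is_norm_on_def by blast

lemma is_norm_on_le_sum_coords: "v \<in> vecs n \<Longrightarrow> nrm v \<le> (\<Sum>i<n. \<bar>v i\<bar> * nrm (unit_vec i))"
proof -
  have "nrm v \<le> (\<Sum>i<m. \<bar>v i\<bar> * nrm (unit_vec i))" if "m \<le> n" "v \<in> vecs m" for m v
    using that
  proof (induction m arbitrary: v)
    case 0
    then show ?case using is_norm_on_zero by (auto simp: vecs_def)
  next
    case (Suc m)
    define w where "w = v(m := 0)"
    have w: "w \<in> vecs m" using Suc.prems(2) unfolding w_def vecs_def by auto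
    have e: "unit_vec m \<in> vecs n" using Suc.prems(1) by (simp add: unit_vec_in_vecs)
    have "v = (\<lambda>i. w i + v m * unit_vec m i)" unfolding w_def unit_vec_def by auto
    then have "nrm v = nrm (\<lambda>i. w i + v m * unit_vec m i)" by (rule arg_cong)
    also have "\<dots> \<le> nrm w + nrm (\<lambda>i. v m * unit_vec m i)"
      using is_norm_on_triangle[OF vecs_mono[OF _ w] vecs_scale[OF e]] Suc.prems(1) by simp
    also have "nrm (\<lambda>i. v m * unit_vec m i) = \<bar>v m\<bar> * nrm (unit_vec m)"
      using is_norm_on_scale[OF e] .
    also have "nrm w \<le> (\<Sum>i<m. \<bar>w i\<bar> * nrm (unit_vec i))" using Suc w by simp
    also have "(\<Sum>i<m. \<bar>w i\<bar> * nrm (unit_vec i)) = (\<Sum>i<m. \<bar>v i\<bar> * nrm (unit_vec i))"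
      unfolding w_def by (intro sum.cong) auto
    finally show ?case by simp
  qed
  then show "v \<in> vecs n \<Longrightarrow> ?thesis" by blast
qed

lemma is_norm_on_le_of_coords_le:
  "\<exists>M\<ge>0. \<forall>v\<in>vecs n. \<forall>e. (\<forall>i. \<bar>v i\<bar> \<le> e) \<longrightarrow> nrm v \<le> M * e"
proof (intro exI[of _ "\<Sum>i<n. nrm (unit_vec i)"] conjI ballI allI impI)
  show "0 \<le> (\<Sum>i<n. nrm (unit_vec i))"
    by (intro sum_nonneg is_norm_on_nonneg unit_vec_in_vecs) simp
  fix v e assume v: "v \<in> vecs n" and e: "\<forall>i. \<bar>v i\<bar> \<le> e"
  have "nrm v \<le> (\<Sum>i<n. \<bar>v i\<bar> * nrm (unit_vec i))" using is_norm_on_le_sum_coords[OF v] .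
  also have "\<dots> \<le> (\<Sum>i<n. e * nrm (unit_vec i))"
    using e by (intro sum_mono mult_right_mono is_norm_on_nonneg unit_vec_in_vecs) auto
  finally show "nrm v \<le> (\<Sum>i<n. nrm (unit_vec i)) * e"
    by (simp add: sum_distrib_left mult.commute)
qed

lemma continuous_on_is_norm_on: "continuous_on (vecs n) nrm"
  unfolding continuous_on_def
proof (intro ballI)
  fix x assume x: "x \<in> vecs n"
  define g where "g = (\<lambda>w. \<Sum>i<n. \<bar>w i - x i\<bar> * nrm (unit_vec i))"
  have "continuous_on UNIV g"
    unfolding g_def by (intro continuous_intros continuous_on_product_coordinates)
  then have "isCont g x" by (simp add: continuous_on_eq_continuous_at)
  then have "(g \<longlongrightarrow> g x) (at x within vecs n)"
    using continuous_at_imp_continuous_at_within continuous_within by blast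
  then have g0: "(g \<longlongrightarrow> 0) (at x within vecs n)" by (simp add: g_def)
  have "\<bar>nrm w - nrm x\<bar> \<le> g w" if w: "w \<in> vecs n" for w
  proof -
    have "nrm w \<le> nrm (\<lambda>i. w i - x i) + nrm x" "nrm x \<le> nrm (\<lambda>i. x i - w i) + nrm w"
      using is_norm_on_triangle[OF vecs_diff[OF w x] x] is_norm_on_triangle[OF vecs_diff[OF x w] w]
      by simp_all
    moreover have "nrm (\<lambda>i. w i - x i) \<le> g w" "nrm (\<lambda>i. x i - w i) \<le> g w"
      using is_norm_on_le_sum_coords[OF vecs_diff[OF w x]] is_norm_on_le_sum_coords[OF vecs_diff[OF x w]]
      by (simp_all add: g_def abs_minus_commute)
    ultimately show ?thesis by linarith
  qed
  then have "eventually (\<lambda>w. norm (nrm w - nrm x) \<le> g w) (at x within vecs n)"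
    by (auto simp: eventually_at_filter)
  from Lim_null_comparison[OF this g0] show "(nrm \<longlongrightarrow> nrm x) (at x within vecs n)"
    by (simp add: LIM_zero_iff)
qed

lemma is_norm_on_coord_le: "\<exists>C>0. \<forall>v\<in>vecs n. \<forall>j. \<bar>v j\<bar> \<le> C * nrm v"
proof -
  define K where "K = {v \<in> vecs n. (\<Sum>i<n. \<bar>v i\<bar>) = 1}"
  obtain m where m: "m > 0" "\<And>u. u \<in> K \<Longrightarrow> m \<le> nrm u"
  proof (cases "K = {}")
    case False
    have "continuous_on K nrm"
      using continuous_on_is_norm_on by (rule continuous_on_subset) (auto simp: K_def)
    then obtain u0 where u0: "u0 \<in> K" "\<And>u. u \<in> K \<Longrightarrow> nrm u0 \<le> nrm u"
      using continuous_attains_inf[OF compact_vecs_l1_sphere[of n, folded K_def] False] by blast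
    have "u0 \<in> vecs n" "u0 \<noteq> (\<lambda>i. 0)" using u0(1) by (auto simp: K_def)
    then have "nrm u0 > 0" using is_norm_on_nonneg is_norm_on_eq_0_iff by (simp add: less_le)
    then show ?thesis using that u0(2) by blast
  qed (use that[of 1] in simp)
  show ?thesis
  proof (intro exI[of _ "1/m"] conjI ballI allI)
    fix v j assume v: "v \<in> vecs n"
    define s where "s = (\<Sum>i<n. \<bar>v i\<bar>)"
    have vj: "\<bar>v j\<bar> \<le> s"
      using v member_le_sum[of j "{..<n}" "\<lambda>i. \<bar>v i\<bar>"] unfolding s_def vecs_def
      by (cases "j < n") (auto intro: sum_nonneg)
    show "\<bar>v j\<bar> \<le> 1 / m * nrm v"
    proof (cases "s = 0")
      case True
      then show ?thesis using vj m is_norm_on_nonneg[OF v] by simp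
    next
      case False
      then have s: "s > 0" unfolding s_def by (simp add: order_le_neq_trans sum_nonneg)
      have "(\<lambda>i. (1 / s) * v i) \<in> K"
        using s v by (simp add: K_def vecs_def abs_mult s_def sum_divide_distrib[symmetric])
      then have "m \<le> nrm (\<lambda>i. (1 / s) * v i)" by (rule m(2))
      also have "\<dots> = nrm v / s" using is_norm_on_scale[OF v, of "1 / s"] s by simp
      finally have "s \<le> nrm v / m" using s m by (simp add: field_simps)
      then show ?thesis using vj by simp
    qed
  qed (use m in simp)
qed

end

lemma aff_maps_in_vecs: "\<psi> \<in> aff_maps d N \<Longrightarrow> \<psi> v \<in> vecs N"
  unfolding aff_maps_def vecs_def by auto

lemma aff_maps_comp:
  assumes "\<kappa> \<in> aff_maps m N" "\<phi> \<in> aff_maps d m"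
  shows "\<kappa> \<circ> \<phi> \<in> aff_maps d N"
proof -
  obtain C e where e: "e \<in> vecs N"
    and \<kappa>: "\<kappa> = (\<lambda>v i. if i < N then (\<Sum>j<m. C i j * v j) + e i else 0)"
    using assms(1) unfolding aff_maps_def by blast
  obtain A b where \<phi>: "\<phi> = (\<lambda>v i. if i < m then (\<Sum>j<d. A i j * v j) + b i else 0)"
    using assms(2) unfolding aff_maps_def by blast
  define A' where "A' = (\<lambda>i k. \<Sum>j<m. C i j * A j k)"
  define b' where "b' = (\<lambda>i. if i < N then (\<Sum>j<m. C i j * b j) + e i else 0)"
  have "(\<kappa> \<circ> \<phi>) v i = (if i < N then (\<Sum>k<d. A' i k * v k) + b' i else 0)" for v i
  proof (cases "i < N")
    case True
    have "(\<kappa> \<circ> \<phi>) v i = (\<Sum>j<m. C i j * ((\<Sum>k<d. A j k * v k) + b j)) + e i"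
      using True unfolding \<kappa> \<phi> by simp
    also have "\<dots> = (\<Sum>j<m. \<Sum>k<d. C i j * A j k * v k) + (\<Sum>j<m. C i j * b j) + e i"
      by (simp add: distrib_left sum.distrib sum_distrib_left mult.assoc)
    also have "(\<Sum>j<m. \<Sum>k<d. C i j * A j k * v k) = (\<Sum>k<d. A' i k * v k)"
      unfolding A'_def by (subst sum.swap) (simp add: sum_distrib_right)
    finally show ?thesis using True unfolding b'_def by simp
  qed (simp add: \<kappa>)
  moreover have "b' \<in> vecs N" unfolding b'_def vecs_def by auto
  ultimately show ?thesis unfolding aff_maps_def by blast
qed

lemma aff_maps_coord_lipschitz:
  assumes nrm: "is_norm_on d nrm" and \<psi>: "\<psi> \<in> aff_maps d N"
  shows "\<exists>L>0. \<forall>u\<in>vecs d. \<forall>v\<in>vecs d. \<forall>i. \<bar>\<psi> u i - \<psi> v i\<bar> \<le> L * nrm (\<lambda>j. u j - v j)"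
proof -
  obtain A b where \<psi>_eq: "\<psi> = (\<lambda>v i. if i < N then (\<Sum>j<d. A i j * v j) + b i else 0)"
    using \<psi> unfolding aff_maps_def by blast
  obtain C where C: "C > 0" "\<And>v j. v \<in> vecs d \<Longrightarrow> \<bar>v j\<bar> \<le> C * nrm v"
    using is_norm_on_coord_le[OF nrm] by blast
  define R where "R = (\<Sum>i<N. \<Sum>j<d. \<bar>A i j\<bar>) + 1"
  have R: "R \<ge> 1" unfolding R_def by (simp add: sum_nonneg)
  show ?thesis
  proof (intro exI[of _ "R * C"] conjI ballI allI)
    fix u v i assume u: "u \<in> vecs d" and v: "v \<in> vecs d"
    define \<delta> where "\<delta> = (\<lambda>j. u j - v j)"
    have \<delta>: "\<delta> \<in> vecs d" unfolding \<delta>_def using u v by (rule vecs_diff)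
    show "\<bar>\<psi> u i - \<psi> v i\<bar> \<le> R * C * nrm \<delta>"
    proof (cases "i < N")
      case True
      have "\<psi> u i - \<psi> v i = (\<Sum>j<d. A i j * \<delta> j)"
        using True unfolding \<psi>_eq \<delta>_def by (simp add: sum_subtractf[symmetric] right_diff_distrib)
      also have "\<bar>\<dots>\<bar> \<le> (\<Sum>j<d. \<bar>A i j\<bar> * (C * nrm \<delta>))"
        by (rule order.trans[OF sum_abs], rule sum_mono)
          (simp add: abs_mult mult_left_mono C(2)[OF \<delta>])
      also have "\<dots> = (\<Sum>j<d. \<bar>A i j\<bar>) * (C * nrm \<delta>)" by (rule sum_distrib_right[symmetric])
      also have "\<dots> \<le> R * (C * nrm \<delta>)"
      proof (rule mult_right_mono)
        have "(\<Sum>j<d. \<bar>A i j\<bar>) \<le> (\<Sum>i<N. \<Sum>j<d. \<bar>A i j\<bar>)"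
          using True by (intro member_le_sum) (auto intro: sum_nonneg)
        then show "(\<Sum>j<d. \<bar>A i j\<bar>) \<le> R" unfolding R_def by simp
        show "0 \<le> C * nrm \<delta>" using C(1) is_norm_on_nonneg[OF nrm \<delta>] by simp
      qed
      finally show ?thesis by (simp add: mult.assoc)
    next
      case False
      then show ?thesis using R C(1) is_norm_on_nonneg[OF nrm \<delta>] unfolding \<psi>_eq by simp
    qed
  qed (use R C in simp)
qed

definition scale_map :: "nat \<Rightarrow> real \<Rightarrow> (nat \<Rightarrow> real) \<Rightarrow> (nat \<Rightarrow> real)" where
  "scale_map d t = (\<lambda>v i. if i < d then t * v i else 0)"

lemma scale_map_eq: "v \<in> vecs d \<Longrightarrow> scale_map d t v = (\<lambda>i. t * v i)"
  unfolding scale_map_def vecs_def by auto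

lemma scale_map_in_aff_maps: "scale_map d t \<in> aff_maps d d"
proof -
  have "scale_map d t = (\<lambda>v i. if i < d then (\<Sum>j<d. (if i = j then t else 0) * v j) + (\<lambda>_. 0) i else 0)"
  proof (intro ext)
    fix v i
    have "(\<Sum>j<d. (if i = j then t else 0) * v j) = (\<Sum>j<d. if i = j then t * v j else 0)"
      by (intro sum.cong) auto
    then show "scale_map d t v i = (if i < d then (\<Sum>j<d. (if i = j then t else 0) * v j) + (\<lambda>_. 0) i else 0)"
      by (simp add: scale_map_def)
  qed
  then show ?thesis unfolding aff_maps_def
    by (intro CollectI exI[of _ "\<lambda>i j. if i = j then t else 0"] exI[of _ "\<lambda>_. 0"] conjI zero_in_vecs)
qed

lemma scale_map_in_inv_aff_maps:
  assumes "t \<noteq> 0" shows "scale_map d t \<in> inv_aff_maps d"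
proof -
  have "bij_betw (scale_map d t) (vecs d) (vecs d)"
    by (rule bij_betw_byWitness[where f' = "scale_map d (1/t)"])
      (use assms in \<open>auto simp: scale_map_def vecs_def\<close>)
  then show ?thesis unfolding inv_aff_maps_def using scale_map_in_aff_maps by blast
qed

lemma softmax_in_vecs: "softmax lam N x \<in> vecs N"
  unfolding softmax_def vecs_def by simp

lemma softmax_le_one: "softmax lam N x i \<le> 1"
proof (cases "i < N")
  case True
  have "exp (lam * x i) \<le> (\<Sum>j<N. exp (lam * x j))" using True by (intro member_le_sum) auto
  moreover have "(\<Sum>j<N. exp (lam * x j)) > 0" using True by (intro sum_pos) auto
  ultimately show ?thesis using True unfolding softmax_def by (simp add: divide_le_eq_1)
qed (simp add: softmax_def)

lemma softmax_le_exp_mult: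
  assumes lam: "0 \<le> lam" and close: "\<forall>j<N. \<bar>x j - y j\<bar> \<le> \<eta>" and i: "i < N"
  shows "softmax lam N x i \<le> exp (2 * lam * \<eta>) * softmax lam N y i"
proof -
  define k where "k = exp (lam * \<eta>)"
  have k: "k > 0" unfolding k_def by simp
  have exp_le: "exp (lam * x j) \<le> k * exp (lam * y j)" "exp (lam * y j) \<le> k * exp (lam * x j)"
    if "j < N" for j
  proof -
    have "lam * (x j - y j) \<le> lam * \<eta>" "lam * (y j - x j) \<le> lam * \<eta>"
      using close that lam by (auto intro!: mult_left_mono simp: abs_le_iff)
    then show "exp (lam * x j) \<le> k * exp (lam * y j)" "exp (lam * y j) \<le> k * exp (lam * x j)"
      unfolding k_def by (auto simp: exp_add[symmetric] algebra_simps)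
  qed
  define Sx where "Sx = (\<Sum>j<N. exp (lam * x j))"
  define Sy where "Sy = (\<Sum>j<N. exp (lam * y j))"
  have Sx: "Sx > 0" unfolding Sx_def using i by (intro sum_pos) auto
  have Sy: "Sy > 0" unfolding Sy_def using i by (intro sum_pos) auto
  have "Sy \<le> (\<Sum>j<N. k * exp (lam * x j))" unfolding Sy_def by (intro sum_mono exp_le(2)) auto
  then have SySx: "Sy \<le> k * Sx" by (simp add: Sx_def sum_distrib_left)
  have "exp (lam * x i) / Sx \<le> k * exp (lam * y i) / Sx"
    using exp_le(1)[OF i] Sx by (simp add: divide_right_mono)
  also have "\<dots> \<le> k * exp (lam * y i) / (Sy / k)"
    using SySx Sx Sy k by (intro divide_left_mono) (auto simp: field_simps)
  also have "\<dots> = (k * k) * (exp (lam * y i) / Sy)" using k by (simp add: field_simps)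
  also have "k * k = exp (2 * lam * \<eta>)" unfolding k_def by (simp add: exp_add[symmetric])
  finally show ?thesis using i unfolding softmax_def Sx_def Sy_def by simp
qed

lemma softmax_diff_le:
  assumes lam: "0 \<le> lam" and \<eta>: "0 \<le> \<eta>" and close: "\<forall>j<N. \<bar>x j - y j\<bar> \<le> \<eta>"
  shows "\<bar>softmax lam N x i - softmax lam N y i\<bar> \<le> exp (2 * lam * \<eta>) - 1"
proof (cases "i < N")
  case True
  have close': "\<forall>j<N. \<bar>y j - x j\<bar> \<le> \<eta>" using close by (simp add: abs_minus_commute)
  have K: "exp (2 * lam * \<eta>) \<ge> 1" using lam \<eta> by simp
  have "softmax lam N x i \<le> exp (2 * lam * \<eta>) * softmax lam N y i"
    "softmax lam N y i \<le> exp (2 * lam * \<eta>) * softmax lam N x i"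
    using softmax_le_exp_mult[OF lam close True] softmax_le_exp_mult[OF lam close' True] by auto
  moreover have "exp (2 * lam * \<eta>) * softmax lam N z i \<le> softmax lam N z i + (exp (2 * lam * \<eta>) - 1)"
    for z
    using mult_left_le[OF softmax_le_one[of lam N z i], of "exp (2 * lam * \<eta>) - 1"] K
    by (simp add: left_diff_distrib)
  ultimately show ?thesis unfolding abs_le_iff by (smt (verit))
qed (use lam \<eta> in \<open>simp add: softmax_def\<close>)

lemma softmax_uniformly_continuous:
  assumes lam: "0 < lam" and e: "0 < e"
  shows "\<exists>\<eta>>0. \<forall>x y. (\<forall>j<N. \<bar>x j - y j\<bar> \<le> \<eta>) \<longrightarrow>
            (\<forall>i. \<bar>softmax lam N x i - softmax lam N y i\<bar> \<le> e)"
proof (intro exI[of _ "ln (1 + e) / (2 * lam)"] conjI allI impI)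
  show "0 < ln (1 + e) / (2 * lam)" using lam e by (simp add: ln_gt_zero)
  fix x y i assume "\<forall>j<N. \<bar>x j - y j\<bar> \<le> ln (1 + e) / (2 * lam)"
  moreover have "exp (2 * lam * (ln (1 + e) / (2 * lam))) - 1 = e" using lam e by simp
  ultimately show "\<bar>softmax lam N x i - softmax lam N y i\<bar> \<le> e"
    using softmax_diff_le[of lam "ln (1 + e) / (2 * lam)"] lam e by (simp add: ln_ge_zero)
qed

lemma hausdorff_hoare_nonpos:
  assumes "\<And>x e. x \<in> E \<Longrightarrow> 0 < e \<Longrightarrow> \<exists>y\<in>E'. dst x y \<le> ereal e"
  shows "hausdorff_hoare dst E E' \<le> 0"
  unfolding hausdorff_hoare_def
proof (rule SUP_least)
  fix x assume x: "x \<in> E"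
  show "(INF y\<in>E'. dst x y) \<le> 0"
  proof (rule ereal_le_epsilon2)
    fix e :: real assume "0 < e"
    then obtain y where "y \<in> E'" "dst x y \<le> ereal e" using assms[OF x] by blast
    then show "(INF y\<in>E'. dst x y) \<le> 0 + ereal e" by (simp add: INF_lower2)
  qed
qed

lemma sup_dist_le:
  "(\<And>y. y \<in> lists S \<Longrightarrow> nrm (\<lambda>i. f y i - f' y i) \<le> e) \<Longrightarrow> sup_dist nrm S f f' \<le> ereal e"
  unfolding sup_dist_def by (rule SUP_least) simp

lemma d_Aff_nonneg:
  assumes nV: "is_norm_on d nV"
  shows "0 \<le> d_Aff nV S d h g"
proof -
  have "0 \<le> sup_dist nV S (\<psi> \<circ> h) (\<phi> \<circ> g)" if "\<psi> \<in> inv_aff_maps d" "\<phi> \<in> inv_aff_maps d" for \<psi> \<phi>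
  proof -
    have "(\<lambda>i. \<psi> (h []) i - \<phi> (g []) i) \<in> vecs d"
      using that by (intro vecs_diff aff_maps_in_vecs) (auto simp: inv_aff_maps_def)
    then have "0 \<le> nV (\<lambda>i. \<psi> (h []) i - \<phi> (g []) i)" by (rule is_norm_on_nonneg[OF nV])
    also have "ereal \<dots> \<le> sup_dist nV S (\<psi> \<circ> h) (\<phi> \<circ> g)"
      unfolding sup_dist_def by (rule SUP_upper2[of "[]"]) simp_all
    finally show ?thesis by (simp add: zero_ereal_def)
  qed
  moreover have "scale_map d 1 \<in> inv_aff_maps d" by (simp add: scale_map_in_inv_aff_maps)
  ultimately have "0 \<le> (INF z\<in>(\<lambda>\<phi>. \<phi> \<circ> g) ` inv_aff_maps d. sup_dist nV S (scale_map d 1 \<circ> h) z)"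
    by (auto intro: INF_greatest)
  then show ?thesis
    unfolding d_Aff_def hausdorff_hoare_def
    using \<open>scale_map d 1 \<in> inv_aff_maps d\<close> by (auto intro: SUP_upper2)
qed

lemma d_Aff_finite_imp_uniform_approx:
  assumes nV: "is_norm_on d nV" and h: "h \<in> lists S \<rightarrow> vecs d"
    and r: "d_Aff nV S d h g \<le> ereal r" and e: "0 < e"
  shows "\<exists>\<phi>\<in>aff_maps d d. \<forall>y\<in>lists S. nV (\<lambda>i. h y i - \<phi> (g y) i) < e"
proof -
  define t where "t = (\<bar>r\<bar> + 1) / e"
  have t: "t > 0" using e unfolding t_def by (simp add: add_nonneg_pos)
  have "scale_map d t \<circ> h \<in> (\<lambda>\<psi>. \<psi> \<circ> h) ` inv_aff_maps d"
    using scale_map_in_inv_aff_maps t by auto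
  then have "(INF z\<in>(\<lambda>\<psi>. \<psi> \<circ> g) ` inv_aff_maps d. sup_dist nV S (scale_map d t \<circ> h) z) \<le> ereal r"
    using r unfolding d_Aff_def hausdorff_hoare_def SUP_le_iff by blast
  also have "ereal r < ereal (\<bar>r\<bar> + 1)" by simp
  finally obtain \<phi> where \<phi>: "\<phi> \<in> inv_aff_maps d"
    and close: "sup_dist nV S (scale_map d t \<circ> h) (\<phi> \<circ> g) < ereal (\<bar>r\<bar> + 1)"
    unfolding INF_less_iff by blast
  have \<phi>_aff: "\<phi> \<in> aff_maps d d" using \<phi> unfolding inv_aff_maps_def by simp
  show ?thesis
  proof (intro bexI[of _ "scale_map d (1/t) \<circ> \<phi>"] ballI)
    show "scale_map d (1/t) \<circ> \<phi> \<in> aff_maps d d"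
      using aff_maps_comp[OF scale_map_in_aff_maps \<phi>_aff] .
    fix y assume y: "y \<in> lists S"
    have hy: "h y \<in> vecs d" using h y by auto
    have \<phi>y: "\<phi> (g y) \<in> vecs d" using aff_maps_in_vecs[OF \<phi>_aff] .
    have "ereal (nV (\<lambda>i. (scale_map d t \<circ> h) y i - (\<phi> \<circ> g) y i)) < ereal (\<bar>r\<bar> + 1)"
      using close unfolding sup_dist_def by (rule order.strict_trans1[OF SUP_upper[OF y]])
    then have lt: "nV (\<lambda>i. t * h y i - \<phi> (g y) i) < \<bar>r\<bar> + 1"
      using scale_map_eq[OF hy] by simp
    have "(\<lambda>i. h y i - (scale_map d (1/t) \<circ> \<phi>) (g y) i) = (\<lambda>i. (1/t) * (t * h y i - \<phi> (g y) i))"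
      using t scale_map_eq[OF \<phi>y] by (auto simp: field_simps)
    then have "nV (\<lambda>i. h y i - (scale_map d (1/t) \<circ> \<phi>) (g y) i) = (1/t) * nV (\<lambda>i. t * h y i - \<phi> (g y) i)"
      using is_norm_on_scale[OF nV vecs_diff[OF vecs_scale[OF hy] \<phi>y], of "1/t"] t by simp
    also have "\<dots> < (1/t) * (\<bar>r\<bar> + 1)" using lt t by (simp add: divide_strict_right_mono)
    also have "\<dots> = e" using e by (simp add: t_def)
    finally show "nV (\<lambda>i. h y i - (scale_map d (1/t) \<circ> \<phi>) (g y) i) < e" .
  qed
qed

lemma d_VDelta_nonpos_if_uniform_approx:
  assumes lam: "0 < lam" and nV: "is_norm_on d nV" and nW: "is_norm_on N nW"
    and h: "h \<in> lists S \<rightarrow> vecs d"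
    and approx: "\<And>e. 0 < e \<Longrightarrow> \<exists>\<phi>\<in>aff_maps d d. \<forall>y\<in>lists S. nV (\<lambda>i. h y i - \<phi> (g y) i) < e"
  shows "d_VDelta lam nW S d N h g \<le> 0"
  unfolding d_VDelta_def
proof (rule hausdorff_hoare_nonpos)
  fix x e assume x: "x \<in> V_N lam d N h" and e: "0 < (e::real)"
  obtain \<kappa> where \<kappa>: "\<kappa> \<in> aff_maps d N" and x_eq: "x = softmax lam N \<circ> \<kappa> \<circ> h"
    using x unfolding V_N_def by blast
  obtain M where M: "0 \<le> M" "\<forall>v\<in>vecs N. \<forall>e. (\<forall>i. \<bar>v i\<bar> \<le> e) \<longrightarrow> nW v \<le> M * e"
    using is_norm_on_le_of_coords_le[OF nW] by blast
  have e': "0 < e / (M + 1)" using e M(1) by simp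
  obtain \<eta> where \<eta>: "0 < \<eta>" and softmax_near: "\<And>u v i. \<forall>j<N. \<bar>u j - v j\<bar> \<le> \<eta> \<Longrightarrow>
      \<bar>softmax lam N u i - softmax lam N v i\<bar> \<le> e / (M + 1)"
    using softmax_uniformly_continuous[OF lam e'] by blast
  obtain L where L: "0 < L"
    "\<forall>u\<in>vecs d. \<forall>v\<in>vecs d. \<forall>i. \<bar>\<kappa> u i - \<kappa> v i\<bar> \<le> L * nV (\<lambda>j. u j - v j)"
    using aff_maps_coord_lipschitz[OF nV \<kappa>] by blast
  obtain \<phi> where \<phi>: "\<phi> \<in> aff_maps d d" and
    close: "\<And>y. y \<in> lists S \<Longrightarrow> nV (\<lambda>i. h y i - \<phi> (g y) i) < \<eta> / L"
    using approx[of "\<eta> / L"] \<eta> L(1) by auto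
  define z where "z = softmax lam N \<circ> (\<kappa> \<circ> \<phi>) \<circ> g"
  have "z \<in> V_N lam d N g"
    unfolding V_N_def z_def by (intro CollectI exI[of _ "\<kappa> \<circ> \<phi>"] conjI aff_maps_comp[OF \<kappa> \<phi>] refl)
  moreover have "sup_dist nW S x z \<le> ereal e"
  proof (rule sup_dist_le)
    fix y assume y: "y \<in> lists S"
    have hy: "h y \<in> vecs d" using h y by auto
    have "\<forall>j<N. \<bar>\<kappa> (h y) j - \<kappa> (\<phi> (g y)) j\<bar> \<le> \<eta>"
    proof (intro allI impI)
      fix j
      have "\<bar>\<kappa> (h y) j - \<kappa> (\<phi> (g y)) j\<bar> \<le> L * nV (\<lambda>i. h y i - \<phi> (g y) i)"
        using L(2) hy aff_maps_in_vecs[OF \<phi>] by blast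
      also have "\<dots> \<le> \<eta>" using close[OF y] L(1) by (simp add: field_simps less_imp_le)
      finally show "\<bar>\<kappa> (h y) j - \<kappa> (\<phi> (g y)) j\<bar> \<le> \<eta>" .
    qed
    then have small: "\<bar>x y i - z y i\<bar> \<le> e / (M + 1)" for i
      unfolding x_eq z_def o_def by (rule softmax_near)
    have diff: "(\<lambda>i. x y i - z y i) \<in> vecs N"
      unfolding x_eq z_def o_def by (intro vecs_diff softmax_in_vecs)
    have "nW (\<lambda>i. x y i - z y i) \<le> M * (e / (M + 1))"
      using M(2)[rule_format, OF diff small] .
    also have "\<dots> \<le> e" using e M(1) by (simp add: field_simps)
    finally show "nW (\<lambda>i. x y i - z y i) \<le> e" .
  qed
  ultimately show "\<exists>z\<in>V_N lam d N g. sup_dist nW S x z \<le> ereal e" by blast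
qed

theorem mainTheorem2:
  fixes lam :: real
  assumes "lam > 0"
  shows "\<exists>c::real. c > 0 \<and>
    (\<forall>(S :: nat set) (d :: nat) (N :: nat) nV nW h g.
       finite S \<longrightarrow> S \<noteq> {} \<longrightarrow> 0 < d \<longrightarrow> 0 < N \<longrightarrow>
       is_norm_on d nV \<longrightarrow> is_norm_on N nW \<longrightarrow>
       h \<in> lists S \<rightarrow> vecs d \<longrightarrow> g \<in> lists S \<rightarrow> vecs d \<longrightarrow>
       d_VDelta lam nW S d N h g \<le> ereal c * d_Aff nV S d h g)"
proof (intro exI[of _ 1] conjI allI impI)
  fix S :: "nat set" and d N :: nat and nV nW h g
  assume nV: "is_norm_on d nV" and nW: "is_norm_on N nW" and h: "h \<in> lists S \<rightarrow> vecs d"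
  show "d_VDelta lam nW S d N h g \<le> ereal 1 * d_Aff nV S d h g"
  proof (cases "d_Aff nV S d h g")
    case (real r)
    then have "d_Aff nV S d h g \<le> ereal r" by simp
    then have "d_VDelta lam nW S d N h g \<le> 0"
      by (intro d_VDelta_nonpos_if_uniform_approx[OF assms nV nW h]
          d_Aff_finite_imp_uniform_approx[OF nV h])
    also have "0 \<le> d_Aff nV S d h g" using d_Aff_nonneg[OF nV] .
    finally show ?thesis by simp
  qed (use d_Aff_nonneg[OF nV] in simp_all)
qed simp

end
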